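(* Let $P$ be a distribution on $\mathbb R$ with mean $\mu$ and variance $\sigma^2\in(0,\infty)$, let $X_1,X_2,\dots\overset{\mathrm{iid}}{\sim}P$, let $\alpha\in(0,1)$, and let $\{\mathrm{CI}_t\}$ be a $(1-\alpha)$-confidence sequence for $\mu$ (i.e. $\Pr[\forall t\in\mathbb N^+,\ \mu\in\mathrm{CI}_t]\ge1-\alpha$, each $\mathrm{CI}_t\subseteq\mathbb R$ depending on $X_1,\dots,X_t$) such that $\widehat\mu_t=\frac1t\sum_{i=1}^tX_i\in\mathrm{CI}_t$ for all $t$. Writing $|\mathrm{CI}_t|=\sup\mathrm{CI}_t-\inf\mathrm{CI}_t$, $$\Pr\left[\limsup_{t\to\infty}\frac{|\mathrm{CI}_t|}{\sigma}\sqrt{\frac{t}{2\log\log t}}\ge1\right]\ge1-\alpha.$$ *)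

theory Defs
  imports "HOL-Probability.Probability"
begin

text \<open>Width of a set of reals, sup minus inf, computed in the extended reals
  (so that unbounded sets get width infinity).\<close>
definition ci_width :: "real set \<Rightarrow> ereal" where
  "ci_width S = Sup (ereal ` S) - Inf (ereal ` S)"

definition obs :: "(nat \<Rightarrow> 'a \<Rightarrow> real) \<Rightarrow> nat \<Rightarrow> 'a \<Rightarrow> real list" where
  "obs X t \<omega> = map (\<lambda>i. X i \<omega>) [1..<t+1]"

end

(*
  The confidence set at time t contains both mu and the sample mean, so its width is at least
  |sample mean - mu| = sigma |S t| / t, where S t is the t-th partial sum of the standardised
  observations. The claim therefore follows, on the coverage event minus a null set, from the
  lower half of the law of the iterated logarithm: limsup |S t| / sqrt (2 t ln ln t) >= 1 a.s.

  That half is derived from the central limit theorem alone. Fix c < 1 and theta large. The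
  increments of S over the geometric blocks [theta^(j-1), theta^j) are independent. Cutting
  block j into about ln j / l sub-blocks, each of whose sums exceeds a times the square root
  of its length with probability at least exp (-l) by the CLT, the whole block increment exceeds
  c (1 + 1/sqrt theta) sqrt (2 theta^j ln ln theta^j) with probability at least 1/j. By the
  second Borel-Cantelli lemma this happens infinitely often, and since |S (theta^(j-1))| is
  comparatively small, |S t| >= c sqrt (2 t ln ln t) infinitely often.
*)

theory Submission
  imports Defs "HOL-Probability.Probability" "HOL-Real_Asymp.Real_Asymp"
begin

definition lil_rate :: "real \<Rightarrow> real" where
  "lil_rate t = sqrt (2 * t * ln (ln t))"

lemma lil_rate_mult_le:
  assumes "1 < t" "1 \<le> \<theta>"
  shows "lil_rate t * sqrt \<theta> \<le> lil_rate (\<theta> * t)"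
proof -
  have "0 < ln t" "ln t \<le> ln (\<theta> * t)"
    using assms by (auto simp: ln_mult)
  then have "ln (ln t) \<le> ln (ln (\<theta> * t))" by simp
  then have "2 * (\<theta> * t) * ln (ln t) \<le> 2 * (\<theta> * t) * ln (ln (\<theta> * t))"
    using assms by (intro mult_left_mono) auto
  then show ?thesis
    by (simp add: lil_rate_def real_sqrt_mult[symmetric] algebra_simps)
qed

lemma divide_lil_rate:
  assumes "0 \<le> t"
  shows "t / lil_rate t = sqrt (t / (2 * ln (ln t)))"
proof (cases "t = 0")
  case False
  then have "t / (2 * ln (ln t)) = (t * t) / (2 * t * ln (ln t))" by simp
  then have "sqrt (t / (2 * ln (ln t))) = sqrt (t * t) / lil_rate t"
    by (simp only: lil_rate_def real_sqrt_divide)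
  then show ?thesis using assms by simp
qed simp

lemma ln_ln_pos:
  fixes t :: real
  assumes "4 \<le> t"
  shows "0 < ln (ln t)"
proof -
  have "exp 1 < t" using exp_le assms by linarith
  then have "1 < ln t"
    using ln_less_cancel_iff[of "exp 1" t] by (simp add: less_trans[OF exp_gt_zero])
  then show ?thesis by simp
qed

lemma lil_rate_pos: "4 \<le> t \<Longrightarrow> 0 < lil_rate t"
  using ln_ln_pos[of t] by (simp add: lil_rate_def)

text \<open>
  If \<open>\<bar>s t\<bar> < c lil_rate t\<close> eventually, both endpoints of a late block are small, and
  \<open>lil_rate (\<theta>^(j-1)) \<le> lil_rate (\<theta>^j) / sqrt \<theta>\<close> bounds the increment by
  \<open>c (1 + 1/sqrt \<theta>) lil_rate (\<theta>^j)\<close>.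
\<close>

lemma frequently_lil_of_increments:
  fixes s :: "nat \<Rightarrow> real" and \<theta> :: nat
  assumes \<theta>: "3 \<le> \<theta>" and c: "0 \<le> c"
    and freq: "\<exists>\<^sub>F j in sequentially.
                 c * (1 + 1 / sqrt \<theta>) * lil_rate (\<theta> ^ j) \<le> s (\<theta> ^ j) - s (\<theta> ^ (j - 1))"
  shows "\<exists>\<^sub>F t in sequentially. c * lil_rate t \<le> \<bar>s t\<bar>"
proof (rule ccontr)
  assume "\<not> ?thesis"
  then obtain T where small: "\<And>t. T \<le> t \<Longrightarrow> \<bar>s t\<bar> < c * lil_rate t"
    unfolding frequently_def eventually_sequentially not_le by blast
  have "s (\<theta> ^ j) - s (\<theta> ^ (j - 1)) < c * (1 + 1 / sqrt \<theta>) * lil_rate (\<theta> ^ j)"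
    if j: "T + 2 \<le> j" for j
  proof -
    have "j - 1 < 2 ^ (j - 1)" by (rule less_exp)
    also have "(2::nat) ^ (j - 1) \<le> \<theta> ^ (j - 1)" using \<theta> by (intro power_mono) auto
    finally have T: "T \<le> \<theta> ^ (j - 1)" using j by linarith
    have "\<theta> ^ (j - 1) \<le> \<theta> ^ j" using \<theta> by (intro power_increasing) auto
    with T have "\<bar>s (\<theta> ^ j)\<bar> < c * lil_rate (\<theta> ^ j)"
      and "\<bar>s (\<theta> ^ (j - 1))\<bar> < c * lil_rate (\<theta> ^ (j - 1))"
      by (blast intro: small order.trans)+
    then have "s (\<theta> ^ j) - s (\<theta> ^ (j - 1)) < c * lil_rate (\<theta> ^ j) + c * lil_rate (\<theta> ^ (j - 1))"
      by linarith
    also have "c * lil_rate (\<theta> ^ (j - 1)) \<le> c * (lil_rate (\<theta> ^ j) / sqrt \<theta>)"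
    proof -
      have "\<theta> \<le> \<theta> ^ (j - 1)" using \<theta> j by (intro self_le_power) auto
      then have "lil_rate (\<theta> ^ (j - 1)) * sqrt \<theta> \<le> lil_rate (real \<theta> * real (\<theta> ^ (j - 1)))"
        using \<theta> by (intro lil_rate_mult_le) linarith+
      also have "real \<theta> * real (\<theta> ^ (j - 1)) = \<theta> ^ j" using j by (cases j) auto
      finally show ?thesis
        using \<theta> c by (intro mult_left_mono) (auto simp: field_simps)
    qed
    finally show ?thesis by (simp add: algebra_simps)
  qed
  then have "\<forall>\<^sub>F j in sequentially.
      \<not> c * (1 + 1 / sqrt \<theta>) * lil_rate (\<theta> ^ j) \<le> s (\<theta> ^ j) - s (\<theta> ^ (j - 1))"
    by (auto simp: eventually_sequentially not_le)
  with freq show False by (simp add: frequently_def)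
qed

lemma Limsup_ge_if_frequently:
  fixes f :: "'a \<Rightarrow> 'b::complete_linorder"
  assumes "\<exists>\<^sub>F x in F. c \<le> f x"
  shows "c \<le> Limsup F f"
proof (rule ccontr)
  assume "\<not> c \<le> Limsup F f"
  then have "\<forall>\<^sub>F x in F. f x < c" by (intro Limsup_lessD) simp
  with assms show False by (simp add: frequently_def not_le)
qed

lemma disjoint_family_on_geometric_blocks:
  fixes \<theta> :: nat
  assumes "1 \<le> \<theta>"
  shows "disjoint_family_on (\<lambda>j. {\<theta> ^ (j - 1)..<\<theta> ^ j}) UNIV"
proof -
  have "{\<theta> ^ (i - 1)..<\<theta> ^ i} \<inter> {\<theta> ^ (j - 1)..<\<theta> ^ j} = {}" if "i < j" for i j
  proof -
    have "\<theta> ^ i \<le> \<theta> ^ (j - 1)" using that assms by (intro power_increasing) auto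
    then show ?thesis by auto
  qed
  then show ?thesis
    unfolding disjoint_family_on_def by (metis Int_commute linorder_neqE_nat)
qed

lemma (in prob_space) prob_indep_vars_avoid_le:
  assumes indep: "indep_vars N D I" and A: "\<And>j. j \<in> I \<Longrightarrow> A j \<in> sets (N j)"
    and J: "finite J" "J \<noteq> {}" "J \<subseteq> I"
  shows "prob (\<Inter>j\<in>J. D j -` (space (N j) - A j) \<inter> space M)
           \<le> exp (- (\<Sum>j\<in>J. prob (D j -` A j \<inter> space M)))"
proof -
  have D: "D j \<in> measurable M (N j)" if "j \<in> I" for j
    using indep that by (simp add: indep_vars_def2)
  have "prob (\<Inter>j\<in>J. D j -` (space (N j) - A j) \<inter> space M)
          = (\<Prod>j\<in>J. prob (D j -` (space (N j) - A j) \<inter> space M))"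
    using J A by (intro indep_varsD[OF indep]) auto
  also have "\<dots> = (\<Prod>j\<in>J. 1 - prob (D j -` A j \<inter> space M))"
  proof (intro prod.cong refl)
    fix j assume "j \<in> J"
    then have "j \<in> I" using J by auto
    then have "D j -` (space (N j) - A j) \<inter> space M = space M - (D j -` A j \<inter> space M)"
      using measurable_space[OF D] by blast
    with \<open>j \<in> I\<close> show "prob (D j -` (space (N j) - A j) \<inter> space M) = 1 - prob (D j -` A j \<inter> space M)"
      using measurable_sets[OF D A] by (simp add: prob_compl)
  qed
  also have "\<dots> \<le> (\<Prod>j\<in>J. exp (- prob (D j -` A j \<inter> space M)))"
    using prob_le_1 exp_ge_add_one_self[of "- prob (D _ -` A _ \<inter> space M)"] by (intro prod_mono) auto
  also have "\<dots> = exp (- (\<Sum>j\<in>J. prob (D j -` A j \<inter> space M)))"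
    using J by (simp add: exp_sum flip: sum_negf)
  finally show ?thesis .
qed

lemma (in prob_space) second_borel_cantelli:
  assumes indep: "indep_vars N D UNIV"
    and A: "\<And>j. A j \<in> sets (N j)"
    and diverge: "\<not> summable (\<lambda>j. prob (D j -` A j \<inter> space M))"
  shows "AE \<omega> in M. \<exists>\<^sub>F j in sequentially. D j \<omega> \<in> A j"
proof -
  define p where "p j = prob (D j -` A j \<inter> space M)" for j
  define Z where "Z J = (\<Inter>j\<in>{J..}. D j -` (space (N j) - A j) \<inter> space M)" for J
  have D: "D j \<in> measurable M (N j)" for j
    using indep by (simp add: indep_vars_def2)
  have Z: "Z J \<in> events" for J
    unfolding Z_def using measurable_sets[OF D] A by (intro sets.countable_INT') auto
  have "prob (Z J) = 0" for J
  proof (rule ccontr)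
    assume "prob (Z J) \<noteq> 0"
    then have pos: "0 < prob (Z J)" using measure_nonneg[of M "Z J"] by linarith
    have "(\<Sum>i<n. p (i + J)) \<le> - ln (prob (Z J))" for n
    proof (cases "n = 0")
      case True
      then show ?thesis using pos prob_le_1[of "Z J"] by simp
    next
      case False
      have "prob (Z J) \<le> prob (\<Inter>j\<in>{J..<J+n}. D j -` (space (N j) - A j) \<inter> space M)"
        using measurable_sets[OF D] A False
        by (intro finite_measure_mono sets.finite_INT) (auto simp: Z_def)
      also have "\<dots> \<le> exp (- (\<Sum>j\<in>{J..<J+n}. p j))"
        unfolding p_def using A False by (intro prob_indep_vars_avoid_le[OF indep]) auto
      also have "(\<Sum>j\<in>{J..<J+n}. p j) = (\<Sum>i<n. p (i + J))"
        using sum.shift_bounds_nat_ivl[of p 0 J n] by (simp add: atLeast0LessThan add.commute)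
      finally show ?thesis
        using pos by (simp add: ln_le_cancel_iff[symmetric, of "prob (Z J)"])
    qed
    then have "summable (\<lambda>i. p (i + J))"
      by (intro summableI_nonneg_bounded) (auto simp: p_def)
    then have "summable p" by (rule summable_iff_shift[THEN iffD1])
    with diverge show False by (simp add: p_def[abs_def])
  qed
  then have "AE \<omega> in M. \<forall>J. \<omega> \<notin> Z J"
    using Z by (simp add: AE_all_countable AE_not_in emeasure_eq_measure null_sets_def)
  with AE_space show ?thesis
  proof eventually_elim
    case (elim \<omega>)
    then show ?case
      using measurable_space[OF D] by (fastforce simp: frequently_sequentially Z_def)
  qed
qed

lemma std_normal_tail_ge:
  fixes a :: real
  assumes "0 \<le> a"
  shows "exp (- (a + 1)\<^sup>2 / 2) / sqrt (2 * pi) \<le> 1 - cdf std_normal_distribution a"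
proof -
  interpret N: real_distribution std_normal_distribution by (rule real_dist_normal_dist)
  let ?d = "exp (- (a + 1)\<^sup>2 / 2) / sqrt (2 * pi)"
  have "ennreal ?d = (\<integral>\<^sup>+x. ennreal ?d * indicator {a<..a+1} x \<partial>lborel)"
    by (simp add: nn_integral_cmult)
  also have "\<dots> \<le> (\<integral>\<^sup>+x. ennreal (std_normal_density x) * indicator {a<..} x \<partial>lborel)"
  proof (intro nn_integral_mono)
    fix x
    show "ennreal ?d * indicator {a<..a+1} x \<le> ennreal (std_normal_density x) * indicator {a<..} x"
    proof (cases "x \<in> {a<..a+1}")
      case True
      then have "x\<^sup>2 \<le> (a + 1)\<^sup>2" using assms by (intro power_mono) auto
      then have "?d \<le> std_normal_density x"
        by (auto simp: std_normal_density_def divide_simps)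
      then show ?thesis using True by (auto simp: indicator_def)
    qed (auto simp: indicator_def)
  qed
  also have "\<dots> = ennreal (measure std_normal_distribution {a<..})"
    by (simp add: emeasure_density N.emeasure_eq_measure[symmetric])
  finally have "?d \<le> measure std_normal_distribution {a<..}"
    by (simp add: ennreal_le_iff)
  also have "\<dots> = 1 - cdf std_normal_distribution a"
    using N.prob_compl[of "{..a}"] by (simp add: cdf_def Compl_eq_Diff_UNIV[symmetric] Compl_atMost)
  finally show ?thesis .
qed

lemma std_normal_tail_neg_ln_le:
  fixes a :: real
  assumes "0 \<le> a"
  shows "0 < 1 - cdf std_normal_distribution a"
    and "2 * - ln ((1 - cdf std_normal_distribution a) / 2) \<le> (a + 1)\<^sup>2 + 2 * ln (2 * sqrt (2 * pi))"
proof -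
  let ?F = "1 - cdf std_normal_distribution a"
  have tail: "exp (- (a + 1)\<^sup>2 / 2) / sqrt (2 * pi) \<le> ?F"
    using assms by (rule std_normal_tail_ge)
  moreover have "0 < exp (- (a + 1)\<^sup>2 / 2) / sqrt (2 * pi)" by simp
  ultimately show F: "0 < ?F" by linarith
  have "ln (exp (- (a + 1)\<^sup>2 / 2) / (2 * sqrt (2 * pi))) \<le> ln (?F / 2)"
    using tail F by (subst ln_le_cancel_iff) (auto simp: field_simps)
  then show "2 * - ln (?F / 2) \<le> (a + 1)\<^sup>2 + 2 * ln (2 * sqrt (2 * pi))"
    by (simp add: ln_div ln_mult)
qed

text \<open>
  The constants of the blocking argument: with \<open>x = c (1 + 1/sqrt \<theta>)\<close> and
  \<open>q = (1 - \<Phi> a) / 2\<close>, we need \<open>2 x\<^sup>2 (-ln q) < a\<^sup>2 (1 - 1/\<theta>)\<close>. This is possible because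
  \<open>-ln q \<approx> a\<^sup>2/2\<close> for large \<open>a\<close>, and \<open>x\<^sup>2 < 1 - 1/\<theta>\<close> for large \<open>\<theta>\<close> since \<open>c < 1\<close>.
\<close>

lemma lil_parameters:
  fixes c :: real
  assumes c: "0 < c" "c < 1"
  obtains \<theta> :: nat and a :: real
  where "3 \<le> \<theta>" "0 \<le> a" "0 < 1 - cdf std_normal_distribution a"
    "2 * (c * (1 + 1 / sqrt \<theta>))\<^sup>2 * - ln ((1 - cdf std_normal_distribution a) / 2)
       < a\<^sup>2 * (1 - 1 / \<theta>)"
proof -
  have "((\<lambda>\<theta>::nat. c\<^sup>2 * ((1 + 1 / sqrt \<theta>)\<^sup>2 / (1 - 1 / \<theta>))) \<longlongrightarrow> c\<^sup>2 * 1) at_top"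
    by (intro tendsto_mult_left) real_asymp
  moreover have "c\<^sup>2 * 1 < 1" using c by (simp add: power_less_one_iff)
  ultimately have "\<forall>\<^sub>F \<theta> in sequentially. (3::nat) \<le> \<theta> \<and> c\<^sup>2 * ((1 + 1 / sqrt \<theta>)\<^sup>2 / (1 - 1 / \<theta>)) < 1"
    by (intro eventually_conj eventually_ge_at_top order_tendstoD)
  then obtain \<theta> :: nat where \<theta>: "3 \<le> \<theta>" and r: "c\<^sup>2 * ((1 + 1 / sqrt \<theta>)\<^sup>2 / (1 - 1 / \<theta>)) < 1"
    by (auto simp: eventually_at_top_linorder)
  define x where "x = c * (1 + 1 / sqrt \<theta>)"
  define f where "f = 1 - 1 / real \<theta>"
  define r where "r = x\<^sup>2 / f"
  define C where "C = 2 * ln (2 * sqrt (2 * pi))"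
  have f: "0 < f" using \<theta> by (simp add: f_def)
  then have x: "x\<^sup>2 = f * r" by (simp add: r_def)
  have "0 \<le> r" "r < 1" using r f by (auto simp: r_def x_def f_def power_mult_distrib)
  then have "\<forall>\<^sub>F a in at_top. 0 \<le> a \<and> r * ((a + 1)\<^sup>2 + C) < a\<^sup>2"
    by (intro eventually_conj eventually_ge_at_top) real_asymp
  then obtain a :: real where a: "0 \<le> a" "r * ((a + 1)\<^sup>2 + C) < a\<^sup>2"
    by (auto simp: eventually_at_top_linorder)
  define l where "l = - ln ((1 - cdf std_normal_distribution a) / 2)"
  have "x\<^sup>2 * (2 * l) \<le> x\<^sup>2 * ((a + 1)\<^sup>2 + C)"
    using std_normal_tail_neg_ln_le(2)[OF a(1)] by (intro mult_left_mono) (simp_all add: l_def C_def)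
  also have "\<dots> = f * (r * ((a + 1)\<^sup>2 + C))" by (simp add: x)
  also have "\<dots> < f * a\<^sup>2"
    using a f by (intro mult_strict_left_mono)
  finally show ?thesis
    using \<theta> a std_normal_tail_neg_ln_le(1)[OF a(1)]
    by (intro that[of \<theta> a]) (auto simp: x_def l_def f_def mult.commute mult.left_commute)
qed

lemma of_nat_power_diff_power_pred:
  fixes \<theta> j :: nat
  assumes "1 \<le> \<theta>" "1 \<le> j"
  shows "real (\<theta> ^ j - \<theta> ^ (j - 1)) = real \<theta> ^ j * (1 - 1 / \<theta>)"
proof -
  have "\<theta> ^ (j - 1) \<le> \<theta> ^ j" using assms by (intro power_increasing) auto
  moreover have "real \<theta> ^ j = real \<theta> * real \<theta> ^ (j - 1)" using assms by (cases j) auto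
  ultimately show ?thesis using assms by (simp add: of_nat_diff field_simps)
qed

lemma of_nat_diff_less_mult_div:
  fixes N k :: nat
  assumes "0 < k"
  shows "real N - real k < real k * real (N div k)"
proof -
  have "N = N div k * k + N mod k" by simp
  moreover have "N mod k < k" using assms by simp
  ultimately have "real N < real (N div k) * real k + real k"
    by (metis add_less_cancel_left of_nat_add of_nat_less_iff of_nat_mult)
  then show ?thesis by (simp add: algebra_simps)
qed

lemma lil_block_inequality:
  fixes a x l u g f P k m :: real
  assumes "0 < l" "0 \<le> f" "0 \<le> P"
    and k: "0 \<le> k" "u / l - 1 \<le> k" "k \<le> u / l"
    and m: "P * f - k \<le> k * m"
    and u: "u\<^sup>2 \<le> P"
    and large: "2 * x\<^sup>2 * g + a\<^sup>2 * f + a\<^sup>2 / l\<^sup>2 \<le> (a\<^sup>2 * f / l - 2 * x\<^sup>2) * u"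
  shows "x\<^sup>2 * (2 * P * (u + g)) \<le> (k * a)\<^sup>2 * m"
proof -
  have "x\<^sup>2 * (2 * (u + g)) \<le> a\<^sup>2 * f * (u / l - 1) - a\<^sup>2 / l\<^sup>2"
    using large by (simp add: algebra_simps)
  then have "P * (x\<^sup>2 * (2 * (u + g))) \<le> P * (a\<^sup>2 * f * (u / l - 1) - a\<^sup>2 / l\<^sup>2)"
    using \<open>0 \<le> P\<close> by (rule mult_left_mono)
  also have "\<dots> \<le> a\<^sup>2 * (P * f * (u / l - 1) - (u / l)\<^sup>2)"
  proof -
    have "(u / l)\<^sup>2 \<le> P / l\<^sup>2"
      using u \<open>0 < l\<close> by (simp add: power_divide divide_right_mono)
    then have "a\<^sup>2 * (u / l)\<^sup>2 \<le> a\<^sup>2 * (P / l\<^sup>2)" by (rule mult_left_mono) simp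
    then show ?thesis by (simp add: algebra_simps)
  qed
  also have "\<dots> \<le> a\<^sup>2 * (k * (P * f - k))"
  proof -
    have "P * f * (u / l - 1) \<le> P * f * k" using k assms by (intro mult_left_mono) auto
    moreover have "k\<^sup>2 \<le> (u / l)\<^sup>2" using k by (intro power_mono) auto
    ultimately show ?thesis
      by (intro mult_left_mono) (auto simp: algebra_simps power2_eq_square)
  qed
  also have "\<dots> \<le> (k * a)\<^sup>2 * m"
  proof -
    have "(a\<^sup>2 * k) * (P * f - k) \<le> (a\<^sup>2 * k) * (k * m)"
      using m k by (intro mult_left_mono) auto
    then show ?thesis by (simp add: power2_eq_square algebra_simps)
  qed
  finally show ?thesis by (simp add: algebra_simps)
qed

text \<open>
  Block \<open>j\<close> (of length \<open>\<theta>^j - \<theta>^(j-1)\<close>) is split into \<open>k \<approx> ln j / l\<close> sub-blocks of length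
  at least \<open>m\<close>. If each sub-block sum exceeds \<open>a sqrt m\<close> with probability \<open>q = exp (-l)\<close>, all do with
  probability \<open>q^k \<ge> 1/j\<close>, and then the block sum exceeds \<open>k a sqrt m \<ge> x lil_rate (\<theta>^j)\<close>.
\<close>

lemma lil_block_split:
  fixes \<theta> j n0 :: nat and a x l :: real
  assumes \<theta>: "2 \<le> \<theta>" and j: "1 \<le> j" and l: "0 < l" and a: "0 \<le> a" and x: "0 \<le> x"
    and j_large: "2 * l \<le> ln j" "(ln j)\<^sup>2 \<le> real \<theta> ^ j"
      "(n0 + 1) * ln j \<le> l * (real \<theta> ^ j * (1 - 1 / \<theta>))"
      "2 * x\<^sup>2 * ln (ln \<theta>) + a\<^sup>2 * (1 - 1 / \<theta>) + a\<^sup>2 / l\<^sup>2 \<le> (a\<^sup>2 * (1 - 1 / \<theta>) / l - 2 * x\<^sup>2) * ln j"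
  shows "\<exists>k m. 1 \<le> k \<and> n0 \<le> m \<and> k * m \<le> \<theta> ^ j - \<theta> ^ (j - 1) \<and>
           1 / real j \<le> exp (- l) ^ k \<and> x * lil_rate (\<theta> ^ j) \<le> k * (a * sqrt m)"
proof -
  define u where "u = ln j"
  define P where "P = real \<theta> ^ j"
  define N where "N = \<theta> ^ j - \<theta> ^ (j - 1)"
  define k where "k = nat \<lfloor>u / l\<rfloor>"
  define m where "m = N div k"
  have "2 \<le> u / l" using j_large(1) l by (simp add: u_def field_simps)
  then have k: "real k \<le> u / l" "u / l - 1 < real k" "1 \<le> k"
    unfolding k_def by linarith+
  have N: "real N = P * (1 - 1 / \<theta>)"
    unfolding N_def P_def using \<theta> j by (intro of_nat_power_diff_power_pred) auto
  have m: "real N - real k < real k * real m"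
    unfolding m_def using k(3) by (intro of_nat_diff_less_mult_div) simp
  have "(n0 + 1) * real k \<le> (n0 + 1) * (u / l)" using k(1) by (intro mult_left_mono) auto
  also have "\<dots> \<le> real N" using j_large(3) l by (simp add: u_def N P_def field_simps)
  finally have "real n0 * real k < real m * real k" using m by (simp add: algebra_simps)
  then have "n0 \<le> m" by (simp add: mult_less_cancel_right)
  have "1 / real j = exp (- u)" using j by (simp add: u_def exp_minus inverse_eq_divide)
  also have "\<dots> \<le> exp (- l) ^ k"
    using k(1) l by (simp add: exp_of_nat_mult[symmetric] field_simps)
  finally have prob: "1 / real j \<le> exp (- l) ^ k" .
  have "ln (ln P) = u + ln (ln \<theta>)"
    using j \<theta> by (simp add: P_def u_def ln_realpow ln_mult)
  then have "x * lil_rate P = sqrt (x\<^sup>2 * (2 * P * (u + ln (ln \<theta>))))"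
    using x by (simp add: lil_rate_def real_sqrt_mult)
  also have "\<dots> \<le> sqrt ((real k * a)\<^sup>2 * real m)"
    using lil_block_inequality[of l "1 - 1 / \<theta>" P "real k" u "real m" x "ln (ln \<theta>)" a]
      j_large(2,4) l m k N \<theta>
    by (intro real_sqrt_le_mono) (simp_all add: u_def P_def)
  also have "\<dots> = real k * (a * sqrt m)"
    using a by (simp add: real_sqrt_mult)
  finally show ?thesis
    using k(3) \<open>n0 \<le> m\<close> prob by (intro exI[of _ k] exI[of _ m]) (simp add: m_def N_def P_def)
qed

lemma eventually_lil_block_split:
  fixes \<theta> n0 :: nat and a x l :: real
  assumes \<theta>: "2 \<le> \<theta>" and l: "0 < l" and a: "0 \<le> a" and x: "0 \<le> x"
    and rate: "2 * x\<^sup>2 * l < a\<^sup>2 * (1 - 1 / \<theta>)"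
  shows "\<forall>\<^sub>F j in sequentially. \<exists>k m. 1 \<le> k \<and> n0 \<le> m \<and> k * m \<le> \<theta> ^ j - \<theta> ^ (j - 1) \<and>
           1 / real j \<le> exp (- l) ^ k \<and> x * lil_rate (\<theta> ^ j) \<le> k * (a * sqrt m)"
proof -
  define f where "f = 1 - 1 / real \<theta>"
  have "1 < real \<theta>" "0 < f" using \<theta> by (simp_all add: f_def)
  have "0 < a\<^sup>2 * f / l - 2 * x\<^sup>2" using rate l by (simp add: f_def pos_less_divide_eq mult.commute)
  then have "\<forall>\<^sub>F j in sequentially.
      2 * x\<^sup>2 * ln (ln \<theta>) + a\<^sup>2 * f + a\<^sup>2 / l\<^sup>2 \<le> (a\<^sup>2 * f / l - 2 * x\<^sup>2) * ln j"
    by real_asymp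
  moreover have "\<forall>\<^sub>F j in sequentially. 2 * l \<le> ln j" by real_asymp
  moreover have "\<forall>\<^sub>F j in sequentially. (ln j)\<^sup>2 \<le> real \<theta> ^ j"
    using \<open>1 < real \<theta>\<close> by real_asymp
  moreover have "\<forall>\<^sub>F j in sequentially. (n0 + 1) * ln j \<le> l * (real \<theta> ^ j * f)"
    using \<open>1 < real \<theta>\<close> \<open>0 < f\<close> l by real_asymp
  ultimately show ?thesis
    using eventually_ge_at_top[of 1]
  proof eventually_elim
    case (elim j)
    show ?case
      by (rule lil_block_split[OF \<theta> elim(5) l a x elim(2,3) elim(4,1)[unfolded f_def]])
  qed
qed

lemma lessThan_blocks_partition:
  fixes k m N :: nat
  assumes k: "1 \<le> k" and N: "k * m \<le> N"
  obtains K where "disjoint_family_on K {..<k}" "(\<Union>b<k. K b) = {..<N}" "\<And>b. b < k \<Longrightarrow> m \<le> card (K b)"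
proof -
  define block where "block i = min (i div m) (k - 1)" for i
  define K where "K b = {i\<in>{..<N}. block i = b}" for b
  have "disjoint_family_on K {..<k}"
    by (auto simp: disjoint_family_on_def K_def)
  moreover have "(\<Union>b<k. K b) = {..<N}"
    using k by (auto simp: K_def block_def)
  moreover have "m \<le> card (K b)" if "b < k" for b
  proof -
    have "{b * m..<b * m + m} \<subseteq> K b"
    proof
      fix i assume i: "i \<in> {b * m..<b * m + m}"
      then have "i div m = b" by (intro div_nat_eqI) (auto simp: mult.commute)
      moreover have "b * m + m \<le> k * m" using that by (metis Suc_leI add.commute mult_Suc mult_le_mono1)
      ultimately show "i \<in> K b" using i that N by (auto simp: K_def block_def)
    qed
    then have "card {b * m..<b * m + m} \<le> card (K b)"
      by (intro card_mono) (auto simp: K_def)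
    then show ?thesis by simp
  qed
  ultimately show ?thesis by (rule that)
qed

locale std_iid_sequence = prob_space +
  fixes Y :: "nat \<Rightarrow> 'a \<Rightarrow> real" and Q :: "real measure"
  assumes indep_Y: "indep_vars (\<lambda>_. borel) Y UNIV"
    and distr_Y: "\<And>n. distr M borel (Y n) = Q"
    and expectation_Y: "\<And>n. expectation (Y n) = 0"
    and integrable_Y_sq: "\<And>n. integrable M (\<lambda>\<omega>. (Y n \<omega>)\<^sup>2)"
    and variance_Y: "\<And>n. variance (Y n) = 1"
begin

lemma measurable_Y [measurable]: "Y n \<in> borel_measurable M"
  using indep_Y by (simp add: indep_vars_def2)

definition S :: "nat \<Rightarrow> 'a \<Rightarrow> real" where
  "S n \<omega> = (\<Sum>i<n. Y i \<omega>)"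

lemma measurable_S [measurable]: "S n \<in> borel_measurable M"
  unfolding S_def by measurable

lemma sum_Y_atLeastLessThan:
  assumes "a \<le> b"
  shows "(\<Sum>i\<in>{a..<b}. Y i \<omega>) = S b \<omega> - S a \<omega>"
  using sum_diff_nat_ivl[of 0 a b "\<lambda>i. Y i \<omega>"] assms by (simp add: S_def atLeast0LessThan)

lemma distr_sum_Y:
  assumes "finite A"
  shows "distr M borel (\<lambda>\<omega>. \<Sum>i\<in>A. Y i \<omega>) = distr M borel (S (card A))"
proof (rule Levy_uniqueness)
  have "char (distr M borel (\<lambda>\<omega>. \<Sum>i\<in>B. Y i \<omega>)) t = char Q t ^ card B" if "finite B" for B t
    using char_distr_sum[OF indep_vars_subset[OF indep_Y], of B t] that by (simp add: distr_Y)
  from this[of A] this[of "{..<card A}"] assms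
  show "char (distr M borel (\<lambda>\<omega>. \<Sum>i\<in>A. Y i \<omega>)) = char (distr M borel (S (card A)))"
    by (auto simp: S_def[abs_def])
qed simp_all

lemma prob_sum_Y_ge:
  assumes "finite A"
  shows "prob {\<omega>\<in>space M. c \<le> (\<Sum>i\<in>A. Y i \<omega>)} = prob {\<omega>\<in>space M. c \<le> S (card A) \<omega>}"
proof -
  have "prob {\<omega>\<in>space M. c \<le> f \<omega>} = measure (distr M borel f) {c..}"
    if [measurable]: "f \<in> borel_measurable M" for f
    by (subst measure_distr) (auto intro!: arg_cong[where f=prob])
  then show ?thesis
    using distr_sum_Y[OF assms] by simp
qed

lemma indep_vars_block_sums:
  assumes "disjoint_family_on K L"
  shows "indep_vars (\<lambda>_. borel) (\<lambda>j \<omega>. \<Sum>i\<in>K j. Y i \<omega>) L"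
proof -
  have "indep_vars (\<lambda>j. PiM (K j) (\<lambda>_. borel)) (\<lambda>j \<omega>. restrict (\<lambda>i. Y i \<omega>) (K j)) L"
    by (rule indep_vars_restrict[OF indep_Y _ assms]) auto
  then have "indep_vars (\<lambda>_. borel) (\<lambda>j \<omega>. (\<lambda>f. \<Sum>i\<in>K j. f i) (restrict (\<lambda>i. Y i \<omega>) (K j))) L"
    by (rule indep_vars_compose2) measurable
  then show ?thesis
    by (rule indep_vars_cong[THEN iffD1, rotated -1]) auto
qed

text \<open>
  Cut \<open>{..<N}\<close> into \<open>k\<close> blocks of length at least \<open>m\<close>: the block sums are independent,
  each exceeds \<open>c\<close> with probability at least \<open>q\<close>, and if all do then \<open>k c \<le> S N\<close>.
\<close>

lemma prob_S_ge_power: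
  assumes q: "0 \<le> q" and tail: "\<And>n. m \<le> n \<Longrightarrow> q \<le> prob {\<omega>\<in>space M. c \<le> S n \<omega>}"
    and k: "1 \<le> k" and N: "k * m \<le> N"
  shows "q ^ k \<le> prob {\<omega>\<in>space M. k * c \<le> S N \<omega>}"
proof -
  obtain K where disj: "disjoint_family_on K {..<k}" and cover: "(\<Union>b<k. K b) = {..<N}"
    and card: "\<And>b. b < k \<Longrightarrow> m \<le> card (K b)"
    using lessThan_blocks_partition[OF k N] by blast
  have fin: "finite (K b)" if "b < k" for b
  proof -
    have "K b \<subseteq> {..<N}" using cover that by blast
    then show ?thesis by (rule finite_subset) simp
  qed
  define B where "B b = (\<lambda>\<omega>. \<Sum>i\<in>K b. Y i \<omega>) -` {c..} \<inter> space M" for b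
  have "q ^ k \<le> (\<Prod>b<k. prob (B b))"
  proof -
    have "q \<le> prob (B b)" if "b < k" for b
    proof -
      have "q \<le> prob {\<omega>\<in>space M. c \<le> (\<Sum>i\<in>K b. Y i \<omega>)}"
        using tail card fin that by (simp add: prob_sum_Y_ge)
      also have "{\<omega>\<in>space M. c \<le> (\<Sum>i\<in>K b. Y i \<omega>)} = B b"
        by (auto simp: B_def)
      finally show ?thesis .
    qed
    then show ?thesis
      using prod_mono[of "{..<k}" "\<lambda>_. q" "\<lambda>b. prob (B b)"] q by simp
  qed
  also have "\<dots> = prob (\<Inter>b<k. B b)"
    unfolding B_def using k
    by (intro indep_varsD[OF indep_vars_block_sums[OF disj], symmetric]) (auto simp: lessThan_empty_iff)
  also have "\<dots> \<le> prob {\<omega>\<in>space M. k * c \<le> S N \<omega>}"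
  proof (intro finite_measure_mono subsetI)
    fix \<omega> assume B: "\<omega> \<in> (\<Inter>b<k. B b)"
    have "k * c = (\<Sum>b<k. c)" by simp
    also have "\<dots> \<le> (\<Sum>b<k. \<Sum>i\<in>K b. Y i \<omega>)"
      using B k by (intro sum_mono) (auto simp: B_def lessThan_empty_iff)
    also have "\<dots> = S N \<omega>"
      unfolding S_def cover[symmetric] using disj fin
      by (intro sum.UNION_disjoint[symmetric]) (auto simp: disjoint_family_on_def)
    finally show "\<omega> \<in> {\<omega>\<in>space M. k * c \<le> S N \<omega>}"
      using B k by (auto simp: B_def lessThan_empty_iff)
  qed measurable
  finally show ?thesis .
qed

lemma eventually_prob_S_ge:
  assumes pos: "0 < 1 - cdf std_normal_distribution a"
  shows "\<forall>\<^sub>F n in sequentially.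
           (1 - cdf std_normal_distribution a) / 2 \<le> prob {\<omega>\<in>space M. a * sqrt n \<le> S n \<omega>}"
proof -
  interpret N: real_distribution std_normal_distribution by (rule real_dist_normal_dist)
  let ?Z = "\<lambda>n \<omega>. S n \<omega> / sqrt (real n * 1\<^sup>2)"
  have clt: "weak_conv_m (\<lambda>n. distr M borel (?Z n)) std_normal_distribution"
    unfolding S_def
    by (rule central_limit_theorem_zero_mean[OF indep_Y expectation_Y _ integrable_Y_sq _ distr_Y])
       (auto simp: variance_Y)
  have "measure std_normal_distribution {a} = 0"
    by (simp add: measure_def emeasure_density nn_integral_null_set)
  then have "isCont (cdf std_normal_distribution) a" by (simp add: N.isCont_cdf)
  with clt have "(\<lambda>n. cdf (distr M borel (?Z n)) a) \<longlonglongrightarrow> cdf std_normal_distribution a"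
    unfolding weak_conv_m_def weak_conv_def by blast
  moreover have "cdf (distr M borel (?Z n)) a = prob {\<omega>\<in>space M. ?Z n \<omega> \<le> a}" for n
    unfolding cdf_def by (subst measure_distr) (auto intro!: arg_cong[where f=prob])
  ultimately have "(\<lambda>n. 1 - prob {\<omega>\<in>space M. ?Z n \<omega> \<le> a}) \<longlonglongrightarrow> 1 - cdf std_normal_distribution a"
    by (auto intro!: tendsto_diff)
  then have "\<forall>\<^sub>F n in sequentially.
      (1 - cdf std_normal_distribution a) / 2 < 1 - prob {\<omega>\<in>space M. ?Z n \<omega> \<le> a}"
    by (rule order_tendstoD) (use pos in auto)
  then show ?thesis
    using eventually_gt_at_top[of 0]
  proof eventually_elim
    case (elim n)
    have "1 - prob {\<omega>\<in>space M. ?Z n \<omega> \<le> a} = prob (space M - {\<omega>\<in>space M. ?Z n \<omega> \<le> a})"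
      by (subst prob_compl) auto
    also have "\<dots> \<le> prob {\<omega>\<in>space M. a * sqrt n \<le> S n \<omega>}"
      using elim(2) by (intro finite_measure_mono) (auto simp: field_simps not_le)
    finally show ?case using elim by simp
  qed
qed

lemma eventually_prob_block_sum_ge:
  fixes \<theta> :: nat
  assumes \<theta>: "2 \<le> \<theta>" and a: "0 \<le> a" and x: "0 \<le> x" and q: "0 < q" "q < 1"
    and tail: "\<forall>\<^sub>F n in sequentially. q \<le> prob {\<omega>\<in>space M. a * sqrt n \<le> S n \<omega>}"
    and rate: "2 * x\<^sup>2 * - ln q < a\<^sup>2 * (1 - 1 / \<theta>)"
  shows "\<forall>\<^sub>F j in sequentially.
           1 / real j \<le> prob {\<omega>\<in>space M. x * lil_rate (\<theta> ^ j) \<le> (\<Sum>i\<in>{\<theta> ^ (j - 1)..<\<theta> ^ j}. Y i \<omega>)}"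
proof -
  obtain n0 where n0: "\<And>n. n0 \<le> n \<Longrightarrow> q \<le> prob {\<omega>\<in>space M. a * sqrt n \<le> S n \<omega>}"
    using tail by (auto simp: eventually_sequentially)
  have "\<forall>\<^sub>F j in sequentially. \<exists>k m. 1 \<le> k \<and> n0 \<le> m \<and> k * m \<le> \<theta> ^ j - \<theta> ^ (j - 1) \<and>
          1 / real j \<le> exp (- (- ln q)) ^ k \<and> x * lil_rate (\<theta> ^ j) \<le> k * (a * sqrt m)"
    using \<theta> a x q rate by (intro eventually_lil_block_split) auto
  then show ?thesis
  proof eventually_elim
    case (elim j)
    then obtain k m where k: "1 \<le> k" "k * m \<le> \<theta> ^ j - \<theta> ^ (j - 1)" and m: "n0 \<le> m"
      and j: "1 / real j \<le> q ^ k" and x: "x * lil_rate (\<theta> ^ j) \<le> k * (a * sqrt m)"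
      using q by auto
    have "q \<le> prob {\<omega>\<in>space M. a * sqrt m \<le> S n \<omega>}" if "m \<le> n" for n
    proof -
      have "a * sqrt m \<le> a * sqrt n" using a that by (intro mult_left_mono) auto
      then have "prob {\<omega>\<in>space M. a * sqrt n \<le> S n \<omega>} \<le> prob {\<omega>\<in>space M. a * sqrt m \<le> S n \<omega>}"
        by (intro finite_measure_mono) auto
      moreover have "q \<le> prob {\<omega>\<in>space M. a * sqrt n \<le> S n \<omega>}"
        using m that by (intro n0) simp
      ultimately show ?thesis by linarith
    qed
    then have "q ^ k \<le> prob {\<omega>\<in>space M. k * (a * sqrt m) \<le> S (card {\<theta> ^ (j - 1)..<\<theta> ^ j}) \<omega>}"
      using q k by (intro prob_S_ge_power) auto
    also have "\<dots> = prob {\<omega>\<in>space M. k * (a * sqrt m) \<le> (\<Sum>i\<in>{\<theta> ^ (j - 1)..<\<theta> ^ j}. Y i \<omega>)}"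
      by (rule prob_sum_Y_ge[symmetric]) simp
    also have "\<dots> \<le> prob {\<omega>\<in>space M. x * lil_rate (\<theta> ^ j) \<le> (\<Sum>i\<in>{\<theta> ^ (j - 1)..<\<theta> ^ j}. Y i \<omega>)}"
      using x by (intro finite_measure_mono) auto
    finally show ?case using j by simp
  qed
qed

lemma frequently_abs_S_ge_lil_rate:
  assumes c: "0 < c" "c < 1"
  shows "AE \<omega> in M. \<exists>\<^sub>F t in sequentially. c * lil_rate t \<le> \<bar>S t \<omega>\<bar>"
proof -
  obtain \<theta> :: nat and a :: real where \<theta>: "3 \<le> \<theta>" and a: "0 \<le> a"
    and F: "0 < 1 - cdf std_normal_distribution a"
    and rate: "2 * (c * (1 + 1 / sqrt \<theta>))\<^sup>2 * - ln ((1 - cdf std_normal_distribution a) / 2)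
                 < a\<^sup>2 * (1 - 1 / \<theta>)"
    by (rule lil_parameters[OF c])
  define x where "x = c * (1 + 1 / sqrt \<theta>)"
  define q where "q = (1 - cdf std_normal_distribution a) / 2"
  define D where "D j \<omega> = (\<Sum>i\<in>{\<theta> ^ (j - 1)..<\<theta> ^ j}. Y i \<omega>)" for j \<omega>
  have indep: "indep_vars (\<lambda>_. borel) D UNIV"
    unfolding D_def using \<theta> by (intro indep_vars_block_sums disjoint_family_on_geometric_blocks) simp
  have "0 \<le> cdf std_normal_distribution a" by (simp add: cdf_def)
  then have "0 < q" "q < 1" using F by (auto simp: q_def)
  then have "\<forall>\<^sub>F j in sequentially. 1 / real j \<le> prob {\<omega>\<in>space M. x * lil_rate (\<theta> ^ j) \<le> D j \<omega>}"
    unfolding D_def using \<theta> a c rate eventually_prob_S_ge[OF F]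
    by (intro eventually_prob_block_sum_ge) (auto simp: x_def q_def[symmetric])
  moreover have "{\<omega>\<in>space M. x * lil_rate (\<theta> ^ j) \<le> D j \<omega>} = D j -` {x * lil_rate (\<theta> ^ j)..} \<inter> space M" for j
    by auto
  ultimately have harmonic: "\<forall>\<^sub>F j in sequentially.
      norm (inverse (real j)) \<le> prob (D j -` {x * lil_rate (\<theta> ^ j)..} \<inter> space M)"
    by (simp add: inverse_eq_divide)
  have "\<not> summable (\<lambda>j. prob (D j -` {x * lil_rate (\<theta> ^ j)..} \<inter> space M))"
    using summable_comparison_test_ev[OF harmonic] not_summable_harmonic[where 'a=real] by blast
  then have "AE \<omega> in M. \<exists>\<^sub>F j in sequentially. D j \<omega> \<in> {x * lil_rate (\<theta> ^ j)..}"
    by (intro second_borel_cantelli[OF indep]) auto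
  then show ?thesis
  proof (rule AE_mp, intro AE_I2 impI)
    fix \<omega> assume "\<exists>\<^sub>F j in sequentially. D j \<omega> \<in> {x * lil_rate (\<theta> ^ j)..}"
    moreover have "D j \<omega> = S (\<theta> ^ j) \<omega> - S (\<theta> ^ (j - 1)) \<omega>" for j
      unfolding D_def using \<theta> by (intro sum_Y_atLeastLessThan power_increasing) auto
    ultimately show "\<exists>\<^sub>F t in sequentially. c * lil_rate t \<le> \<bar>S t \<omega>\<bar>"
      using \<theta> c by (intro frequently_lil_of_increments) (auto simp: x_def)
  qed
qed

lemma AE_limsup_abs_S_div_lil_rate_ge_1:
  "AE \<omega> in M. 1 \<le> limsup (\<lambda>t. ereal (\<bar>S t \<omega>\<bar> / lil_rate t))"
proof -
  have "0 < 1 - 1 / real (Suc (Suc n))" "1 - 1 / real (Suc (Suc n)) < 1" for n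
    by (simp_all add: field_simps)
  then have "AE \<omega> in M. \<forall>n. \<exists>\<^sub>F t in sequentially. (1 - 1 / Suc (Suc n)) * lil_rate t \<le> \<bar>S t \<omega>\<bar>"
    by (simp add: AE_all_countable frequently_abs_S_ge_lil_rate)
  then show ?thesis
  proof eventually_elim
    case (elim \<omega>)
    have bound: "ereal (1 - 1 / Suc (Suc n)) \<le> limsup (\<lambda>t. ereal (\<bar>S t \<omega>\<bar> / lil_rate t))" for n
    proof (rule Limsup_ge_if_frequently)
      have "\<forall>\<^sub>F t in sequentially. 0 < lil_rate t"
        using eventually_ge_at_top[of 4]
        by eventually_elim (simp add: lil_rate_pos)
      with elim have "\<exists>\<^sub>F t in sequentially.
          (1 - 1 / Suc (Suc n)) * lil_rate t \<le> \<bar>S t \<omega>\<bar> \<and> 0 < lil_rate t"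
        by (intro frequently_eventually_frequently) auto
      then show "\<exists>\<^sub>F t in sequentially. ereal (1 - 1 / Suc (Suc n)) \<le> ereal (\<bar>S t \<omega>\<bar> / lil_rate t)"
        by (rule frequently_elim1) (simp add: pos_le_divide_eq)
    qed
    have "(\<lambda>n. ereal (1 - 1 / Suc (Suc n))) \<longlonglongrightarrow> ereal 1"
      by (intro tendsto_ereal) real_asymp
    then have "ereal 1 \<le> limsup (\<lambda>t. ereal (\<bar>S t \<omega>\<bar> / lil_rate t))"
      by (rule LIMSEQ_le_const2) (use bound in blast)
    then show ?case by (simp add: one_ereal_def)
  qed
qed

end

lemma (in prob_space) indep_vars_Suc_compose:
  fixes X :: "nat \<Rightarrow> 'a \<Rightarrow> real" and h :: "real \<Rightarrow> real"
  assumes indep: "indep_vars (\<lambda>_. borel) X {1..}" and [measurable]: "h \<in> borel_measurable borel"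
  shows "indep_vars (\<lambda>_. borel) (\<lambda>i \<omega>. h (X (Suc i) \<omega>)) UNIV"
proof -
  have "indep_vars (\<lambda>i. PiM {Suc i} (\<lambda>_. borel)) (\<lambda>i \<omega>. restrict (\<lambda>j. X j \<omega>) {Suc i}) UNIV"
    by (rule indep_vars_restrict[OF indep]) (auto simp: disjoint_family_on_def)
  then have "indep_vars (\<lambda>_. borel) (\<lambda>i \<omega>. (\<lambda>f. h (f (Suc i))) (restrict (\<lambda>j. X j \<omega>) {Suc i})) UNIV"
    by (rule indep_vars_compose2) simp
  then show ?thesis
    by (rule indep_vars_cong[THEN iffD1, rotated -1]) auto
qed

lemma (in prob_space) std_iid_sequence_standardize:
  fixes X :: "nat \<Rightarrow> 'a \<Rightarrow> real" and P :: "real measure" and \<mu> \<sigma> :: real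
  assumes "prob_space P"
    and indep: "indep_vars (\<lambda>_. borel) X {1..}"
    and distr: "\<And>i. 1 \<le> i \<Longrightarrow> distr M borel (X i) = P"
    and int: "integrable P (\<lambda>x. x)" "integrable P (\<lambda>x. x ^ 2)"
    and \<mu>: "\<mu> = (\<integral>x. x \<partial>P)" and \<sigma>: "0 < \<sigma>" and var: "\<sigma> ^ 2 = (\<integral>x. (x - \<mu>) ^ 2 \<partial>P)"
  shows "std_iid_sequence M (\<lambda>i \<omega>. (X (Suc i) \<omega> - \<mu>) / \<sigma>) (distr P borel (\<lambda>x. (x - \<mu>) / \<sigma>))"
proof -
  interpret P: prob_space P by fact
  define g where "g x = (x - \<mu>) / \<sigma>" for x
  have [measurable]: "X (Suc i) \<in> borel_measurable M" for i
    using indep by (simp add: indep_vars_def2)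
  have "integrable P (\<lambda>x. x ^ 2 - 2 * \<mu> * x + \<mu>\<^sup>2)"
    using int by auto
  moreover have "x ^ 2 - 2 * \<mu> * x + \<mu>\<^sup>2 = (x - \<mu>)\<^sup>2" for x :: real
    by (simp add: power2_diff)
  ultimately have "integrable P (\<lambda>x. (x - \<mu>)\<^sup>2 / \<sigma>\<^sup>2)"
    by (intro integrable_divide) simp
  then have int_g2: "integrable P (\<lambda>x. (g x)\<^sup>2)"
    by (simp add: g_def power_divide)
  have integral_g: "expectation (\<lambda>\<omega>. h (g (X (Suc i) \<omega>))) = (\<integral>x. h (g x) \<partial>P)"
    if [measurable]: "h \<in> borel_measurable borel" for h :: "real \<Rightarrow> real" and i
    using integral_distr[of "X (Suc i)" M borel "\<lambda>x. h (g x)"] distr[of "Suc i"]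
    by (simp add: g_def)
  show ?thesis
  proof
    show "indep_vars (\<lambda>_. borel) (\<lambda>i \<omega>. (X (Suc i) \<omega> - \<mu>) / \<sigma>) UNIV"
      using indep by (rule indep_vars_Suc_compose) simp
    show "distr M borel (\<lambda>\<omega>. (X (Suc i) \<omega> - \<mu>) / \<sigma>) = distr P borel (\<lambda>x. (x - \<mu>) / \<sigma>)" for i
      using distr_distr[of "\<lambda>x. (x - \<mu>) / \<sigma>" borel borel "X (Suc i)" M] distr[of "Suc i"]
      by (simp add: comp_def)
    show mean: "expectation (\<lambda>\<omega>. (X (Suc i) \<omega> - \<mu>) / \<sigma>) = 0" for i
    proof -
      have "expectation (\<lambda>\<omega>. (X (Suc i) \<omega> - \<mu>) / \<sigma>) = (\<integral>x. (x - \<mu>) / \<sigma> \<partial>P)"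
        using integral_g[of "\<lambda>x. x" i] by (simp add: g_def)
      also have "\<dots> = ((\<integral>x. x \<partial>P) - \<mu>) / \<sigma>"
        using int by (simp add: P.prob_space)
      finally show ?thesis by (simp add: \<mu>)
    qed
    show "integrable M (\<lambda>\<omega>. ((X (Suc i) \<omega> - \<mu>) / \<sigma>)\<^sup>2)" for i
      using integrable_distr_eq[of "X (Suc i)" M borel "\<lambda>x. (g x)\<^sup>2"] distr[of "Suc i"] int_g2
      unfolding g_def by simp
    show "variance (\<lambda>\<omega>. (X (Suc i) \<omega> - \<mu>) / \<sigma>) = 1" for i
    proof -
      have "variance (\<lambda>\<omega>. (X (Suc i) \<omega> - \<mu>) / \<sigma>) = (\<integral>x. (g x)\<^sup>2 \<partial>P)"
        using integral_g[of "\<lambda>x. x\<^sup>2" i] by (simp only: mean diff_zero) (simp add: g_def)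
      also have "\<dots> = (\<integral>x. (x - \<mu>)\<^sup>2 \<partial>P) / \<sigma>\<^sup>2"
        by (simp add: g_def power_divide)
      also have "\<dots> = 1"
        using \<sigma> by (simp add: var[symmetric])
      finally show ?thesis .
    qed
  qed
qed

lemma ci_width_ge_abs_diff:
  assumes "u \<in> C" "v \<in> C"
  shows "ereal \<bar>u - v\<bar> \<le> ci_width C"
proof -
  have "ereal (max u v) \<le> Sup (ereal ` C)" "Inf (ereal ` C) \<le> ereal (min u v)"
    using assms by (auto intro: Sup_upper Inf_lower simp: max_def min_def)
  then have "ereal (max u v) - ereal (min u v) \<le> ci_width C"
    unfolding ci_width_def by (rule ereal_minus_mono)
  moreover have "ereal (max u v) - ereal (min u v) = ereal \<bar>u - v\<bar>"
    by (simp add: max_def min_def)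
  ultimately show ?thesis by simp
qed

lemma ereal_divide_mult_le:
  fixes d \<sigma> s :: real and W :: ereal
  assumes "ereal d \<le> W" "0 < \<sigma>" "0 \<le> s"
  shows "ereal (d / \<sigma> * s) \<le> W / ereal \<sigma> * ereal s"
proof -
  have "ereal d / ereal \<sigma> \<le> W / ereal \<sigma>" using assms by (intro ereal_divide_right_mono) auto
  then have "ereal d / ereal \<sigma> * ereal s \<le> W / ereal \<sigma> * ereal s"
    using assms by (intro ereal_mult_right_mono) auto
  then show ?thesis using assms by simp
qed

lemma limsup_ci_width_ge:
  fixes x :: "nat \<Rightarrow> real" and C :: "nat \<Rightarrow> real set" and \<mu> \<sigma> :: real
  assumes \<sigma>: "0 < \<sigma>"
    and cover: "\<And>t. 1 \<le> t \<Longrightarrow> \<mu> \<in> C t"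
    and mean: "\<And>t. 1 \<le> t \<Longrightarrow> (\<Sum>i=1..t. x i) / t \<in> C t"
    and lil: "1 \<le> limsup (\<lambda>t. ereal (\<bar>\<Sum>i<t. (x (Suc i) - \<mu>) / \<sigma>\<bar> / lil_rate t))"
  shows "1 \<le> limsup (\<lambda>t. ci_width (C t) / ereal \<sigma> * ereal (sqrt (t / (2 * ln (ln t)))))"
proof -
  have "ereal (\<bar>\<Sum>i<t. (x (Suc i) - \<mu>) / \<sigma>\<bar> / lil_rate t)
          \<le> ci_width (C t) / ereal \<sigma> * ereal (sqrt (t / (2 * ln (ln t))))" if t: "4 \<le> t" for t
  proof -
    define m where "m = (\<Sum>i=1..t. x i) / t"
    have "(\<Sum>i<t. (x (Suc i) - \<mu>) / \<sigma>) = t * (m - \<mu>) / \<sigma>"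
      using t \<sigma>
      by (simp add: m_def sum.atLeast1_atMost_eq sum_subtractf sum_divide_distrib[symmetric] field_simps)
    then have "\<bar>\<Sum>i<t. (x (Suc i) - \<mu>) / \<sigma>\<bar> / lil_rate t = \<bar>m - \<mu>\<bar> / \<sigma> * (t / lil_rate t)"
      using \<sigma> by (simp add: abs_mult abs_divide)
    also have "\<dots> = \<bar>m - \<mu>\<bar> / \<sigma> * sqrt (t / (2 * ln (ln t)))"
      by (simp add: divide_lil_rate)
    finally have eq: "\<bar>\<Sum>i<t. (x (Suc i) - \<mu>) / \<sigma>\<bar> / lil_rate t
                        = \<bar>m - \<mu>\<bar> / \<sigma> * sqrt (t / (2 * ln (ln t)))" .
    have "ereal \<bar>m - \<mu>\<bar> \<le> ci_width (C t)"
      unfolding m_def using t by (intro ci_width_ge_abs_diff mean cover) auto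
    then show ?thesis
      unfolding eq using \<sigma> ln_ln_pos[of t] t by (intro ereal_divide_mult_le) auto
  qed
  then have "limsup (\<lambda>t. ereal (\<bar>\<Sum>i<t. (x (Suc i) - \<mu>) / \<sigma>\<bar> / lil_rate t))
      \<le> limsup (\<lambda>t. ci_width (C t) / ereal \<sigma> * ereal (sqrt (t / (2 * ln (ln t)))))"
    by (intro Limsup_mono) (auto simp: eventually_sequentially)
  with lil show ?thesis by order
qed

theorem proposition2:
  fixes M :: "'a measure" and P :: "real measure"
    and X :: "nat \<Rightarrow> 'a \<Rightarrow> real"
    and CI :: "nat \<Rightarrow> real list \<Rightarrow> real set"
    and \<mu> \<sigma> \<alpha> :: real
  assumes "prob_space M"
    and "prob_space P"
    and "\<And>i. i \<ge> 1 \<Longrightarrow> X i \<in> borel_measurable M"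
    and "prob_space.indep_vars M (\<lambda>_. borel) X {1..}"
    and "\<And>i. i \<ge> 1 \<Longrightarrow> distr M borel (X i) = P"
    and "integrable P (\<lambda>x. x)" and "integrable P (\<lambda>x. x ^ 2)"
    and "\<mu> = (\<integral>x. x \<partial>P)"
    and "\<sigma> > 0" and "\<sigma> ^ 2 = (\<integral>x. (x - \<mu>) ^ 2 \<partial>P)"
    and "0 < \<alpha>" and "\<alpha> < 1"
    and "{\<omega> \<in> space M. \<forall>t\<ge>1. \<mu> \<in> CI t (obs X t \<omega>)} \<in> sets M"
    and "measure M {\<omega> \<in> space M. \<forall>t\<ge>1. \<mu> \<in> CI t (obs X t \<omega>)} \<ge> 1 - \<alpha>"
    and "\<And>t \<omega>. t \<ge> 1 \<Longrightarrow> \<omega> \<in> space M \<Longrightarrow>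
           (\<Sum>i=1..t. X i \<omega>) / real t \<in> CI t (obs X t \<omega>)"
  shows "\<exists>A \<in> sets M. measure M A \<ge> 1 - \<alpha> \<and>
           A \<subseteq> {\<omega> \<in> space M.
              limsup (\<lambda>t. ci_width (CI t (obs X t \<omega>)) / ereal \<sigma>
                        * ereal (sqrt (real t / (2 * ln (ln (real t)))))) \<ge> 1}"
proof -
  interpret prob_space M by fact
  interpret std_iid_sequence M "\<lambda>i \<omega>. (X (Suc i) \<omega> - \<mu>) / \<sigma>" "distr P borel (\<lambda>x. (x - \<mu>) / \<sigma>)"
    by (rule std_iid_sequence_standardize[OF assms(2,4-10)])
  define E where "E = {\<omega> \<in> space M. \<forall>t\<ge>1. \<mu> \<in> CI t (obs X t \<omega>)}"
  obtain N where N: "{\<omega>\<in>space M. \<not> 1 \<le> limsup (\<lambda>t. ereal (\<bar>S t \<omega>\<bar> / lil_rate t))} \<subseteq> N"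
    and "emeasure M N = 0" "N \<in> sets M"
    using AE_limsup_abs_S_div_lil_rate_ge_1 by (rule AE_E)
  then have null: "N \<in> null_sets M" by (simp add: null_sets_def)
  have E: "E \<in> sets M" unfolding E_def by (rule assms(13))
  have "E - N \<in> sets M" using E null_setsD2[OF null] by (rule sets.Diff)
  moreover have "1 - \<alpha> \<le> measure M (E - N)"
    using assms(14) measure_Diff_null_set[OF E null] unfolding E_def by linarith
  moreover have "E - N \<subseteq> {\<omega> \<in> space M.
      limsup (\<lambda>t. ci_width (CI t (obs X t \<omega>)) / ereal \<sigma> * ereal (sqrt (real t / (2 * ln (ln (real t)))))) \<ge> 1}"
  proof safe
    fix \<omega> assume "\<omega> \<in> E" "\<omega> \<notin> N"
    then have \<omega>: "\<omega> \<in> space M" and cover: "\<And>t. 1 \<le> t \<Longrightarrow> \<mu> \<in> CI t (obs X t \<omega>)"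
      and lil: "1 \<le> limsup (\<lambda>t. ereal (\<bar>S t \<omega>\<bar> / lil_rate t))"
      using N unfolding E_def by blast+
    show "1 \<le> limsup (\<lambda>t. ci_width (CI t (obs X t \<omega>)) / ereal \<sigma> * ereal (sqrt (real t / (2 * ln (ln (real t))))))"
      by (rule limsup_ci_width_ge[OF assms(9) cover assms(15)[OF _ \<omega>] lil[unfolded S_def]])
  qed (simp add: E_def)
  ultimately show ?thesis by blast
qed

end
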